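(* Let $G$ be a connected graph with root $x_0$, let $\lambda,k\ge1$ and $N\in\mathbb N$. Then taking the $(N,1)$-skeleton of the skeleton $G_{\lambda,k}$ (rooted at the block of $x_0$) yields the skeleton $G_{N\lambda,k}$ of $G$: that is, $G_{(\lambda,k)_{(N,1)}}=G_{N\lambda,k}$, in the sense that two vertices $x,y$ of $G$ are sent to the same vertex by the natural map $G\to G_{N\lambda,k}$ iff they are sent to the same vertex by the composite natural map $G\to G_{\lambda,k}\to G_{(\lambda,k)_{(N,1)}}$, and the edges correspond accordingly.
   Context: $d$ is the graph metric. A set $X$ of vertices is $k$-connected if any two of its points are joined by a finite sequence in $X$ with consecutive distances $\le k$. Skeleton $G_{\lambda,k}$ of a connected graph $G$ (root $x_0\in V(G)$, scale $\lambda\ge1$, connectivity $k\ge1$): layers $A_{N,\lambda}=\{x: N\lambda<d(x,x_0)\le(N+1)\lambda\}$, $N\in\mathbb Z$; blocks are the maximal $k$-connected subsets of layers (distances in $G$); $G_{\lambda,k}$ has a vertex per block and an edge between two blocks iff an edge of $G$ joins a vertex of one to a vertex of the other. The natural map sends each vertex to its block. $G_{(\lambda,k)_{(\lambda',k')}}$ denotes the $(\lambda',k')$-skeleton of the graph $G_{\lambda,k}$ (with its own graph metric), rooted at the block containing $x_0$. *)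

theory Defs
  imports Complex_Main
begin

definition graph :: "'a set \<Rightarrow> ('a \<Rightarrow> 'a \<Rightarrow> bool) \<Rightarrow> bool" where
  "graph V E \<longleftrightarrow> (\<forall>x y. E x y \<longrightarrow> x \<in> V \<and> y \<in> V \<and> E y x)"

definition walk :: "'a set \<Rightarrow> ('a \<Rightarrow> 'a \<Rightarrow> bool) \<Rightarrow> 'a list \<Rightarrow> bool" where
  "walk V E xs \<longleftrightarrow> xs \<noteq> [] \<and> set xs \<subseteq> V \<and> (\<forall>i. Suc i < length xs \<longrightarrow> E (xs ! i) (xs ! Suc i))"

definition connected_graph :: "'a set \<Rightarrow> ('a \<Rightarrow> 'a \<Rightarrow> bool) \<Rightarrow> bool" where
  "connected_graph V E \<longleftrightarrow> V \<noteq> {} \<and>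
     (\<forall>x\<in>V. \<forall>y\<in>V. \<exists>xs. walk V E xs \<and> hd xs = x \<and> last xs = y)"

definition gdist :: "'a set \<Rightarrow> ('a \<Rightarrow> 'a \<Rightarrow> bool) \<Rightarrow> 'a \<Rightarrow> 'a \<Rightarrow> nat" where
  "gdist V E x y = (LEAST n. \<exists>xs. walk V E xs \<and> hd xs = x \<and> last xs = y \<and> length xs = Suc n)"

definition k_connected :: "('a \<Rightarrow> 'a \<Rightarrow> nat) \<Rightarrow> real \<Rightarrow> 'a set \<Rightarrow> bool" where
  "k_connected d k X \<longleftrightarrow> (\<forall>x\<in>X. \<forall>y\<in>X. \<exists>xs. xs \<noteq> [] \<and> hd xs = x \<and> last xs = y \<and> set xs \<subseteq> X \<and>
      (\<forall>i. Suc i < length xs \<longrightarrow> real (d (xs ! i) (xs ! Suc i)) \<le> k))"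

definition layer :: "'a set \<Rightarrow> ('a \<Rightarrow> 'a \<Rightarrow> bool) \<Rightarrow> 'a \<Rightarrow> real \<Rightarrow> int \<Rightarrow> 'a set" where
  "layer V E x0 lam n = {x\<in>V. real_of_int n * lam < real (gdist V E x x0) \<and>
                                  real (gdist V E x x0) \<le> (real_of_int n + 1) * lam}"

definition blocks :: "'a set \<Rightarrow> ('a \<Rightarrow> 'a \<Rightarrow> bool) \<Rightarrow> 'a \<Rightarrow> real \<Rightarrow> real \<Rightarrow> 'a set set" where
  "blocks V E x0 lam k = {B. B \<noteq> {} \<and> (\<exists>n. B \<subseteq> layer V E x0 lam n \<and>
       k_connected (gdist V E) k B \<and>
       (\<forall>C. B \<subseteq> C \<and> C \<subseteq> layer V E x0 lam n \<and> k_connected (gdist V E) k C \<longrightarrow> C = B))}"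

definition skel_E :: "'a set \<Rightarrow> ('a \<Rightarrow> 'a \<Rightarrow> bool) \<Rightarrow> 'a \<Rightarrow> real \<Rightarrow> real \<Rightarrow> 'a set \<Rightarrow> 'a set \<Rightarrow> bool" where
  "skel_E V E x0 lam k B C \<longleftrightarrow> B \<in> blocks V E x0 lam k \<and> C \<in> blocks V E x0 lam k \<and> B \<noteq> C \<and>
       (\<exists>x\<in>B. \<exists>y\<in>C. E x y)"

definition skel_map :: "'a set \<Rightarrow> ('a \<Rightarrow> 'a \<Rightarrow> bool) \<Rightarrow> 'a \<Rightarrow> real \<Rightarrow> real \<Rightarrow> 'a \<Rightarrow> 'a set" where
  "skel_map V E x0 lam k x = (THE B. B \<in> blocks V E x0 lam k \<and> x \<in> B)"

end

theory Submission
  imports Defs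
begin

text \<open>
  Let the level of x be \<lceil>d(x, x0) / lam\<rceil>. Blocks are the classes of the equivalence
  generated by "same level and distance at most k". As lam, k \<ge> 1, the level changes by at
  most one along an edge and adjacent vertices of equal level lie in one block; following a
  geodesic to x0 shows that the block of x has distance exactly level x from the root block
  in G_{lam,k}. So the (N,1)-layer of the block of x and the (N lam)-layer of x are both
  determined by \<lceil>level x / N\<rceil>. A step between adjacent blocks of one (N,1)-layer is an edge
  of G inside one (N lam)-layer. Conversely, a geodesic of length at most k between two
  points of an (N lam)-layer may leave that layer, but it re-enters at a level it has already
  visited; since its points of equal level share a block, the blocks it meets inside the
  layer form a chain of adjacent blocks inside one (N,1)-layer.
\<close>

lemma relpowp_symp:
  assumes "symp E" and "(E ^^ n) a b"
  shows "(E ^^ n) b a"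
  using assms(2)
proof (induction n arbitrary: a b)
  case 0
  then show ?case by simp
next
  case (Suc n)
  then obtain c where "E a c" "(E ^^ n) c b"
    using relpowp_Suc_D2 by metis
  then show ?case
    using Suc.IH assms(1) relpowp_Suc_I by (metis sympD)
qed

lemma chain_imp_rtranclp:
  "xs \<noteq> [] \<Longrightarrow> (\<forall>i. Suc i < length xs \<longrightarrow> R (xs ! i) (xs ! Suc i)) \<Longrightarrow>
    R\<^sup>*\<^sup>* (hd xs) (last xs)"
proof (induction xs)
  case (Cons x xs)
  then show ?case
    by (cases xs) (fastforce intro: converse_rtranclp_into_rtranclp)+
qed simp

lemma rtranclp_imp_chain:
  assumes "R\<^sup>*\<^sup>* a b"
  obtains xs where "xs \<noteq> []" "hd xs = a" "last xs = b" "set xs \<subseteq> {c. R\<^sup>*\<^sup>* a c}"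
    "\<forall>i. Suc i < length xs \<longrightarrow> R (xs ! i) (xs ! Suc i)"
proof -
  obtain n f where f: "f 0 = a" "f n = b" "\<forall>i<n. R (f i) (f (Suc i))"
    using assms unfolding rtranclp_power relpowp_fun_conv by blast
  have "R\<^sup>*\<^sup>* a (f i)" if "i \<le> n" for i
    unfolding rtranclp_power relpowp_fun_conv using f that by (intro exI[of _ i] exI[of _ f]) auto
  then show ?thesis
    using f by (intro that[of "map f [0..<Suc n]"])
      (auto simp: hd_map last_map nth_Cons' less_Suc_eq_le simp del: upt_Suc)
qed

lemma int_path_propagate:
  fixes f :: "nat \<Rightarrow> int"
  assumes step: "\<And>s. s < t \<Longrightarrow> \<bar>f (Suc s) - f s\<bar> \<le> 1"
    and convex: "\<And>a b m. P a \<Longrightarrow> P b \<Longrightarrow> a \<le> m \<Longrightarrow> m \<le> b \<Longrightarrow> P m"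
    and start: "P (f 0)" "Q 0"
    and Q_step: "\<And>s. s < t \<Longrightarrow> P (f s) \<Longrightarrow> P (f (Suc s)) \<Longrightarrow> Q s \<Longrightarrow> Q (Suc s)"
    and Q_level: "\<And>i j. i < j \<Longrightarrow> j \<le> t \<Longrightarrow> f i = f j \<Longrightarrow> Q i \<Longrightarrow> Q j"
    and "j \<le> t" "P (f j)"
  shows "Q j"
  using assms(7,8)
proof (induction j rule: less_induct)
  case (less j)
  show ?case
  proof (cases j)
    case 0
    then show ?thesis using start by simp
  next
    case (Suc s)
    show ?thesis
    proof (cases "P (f s)")
      case True
      then show ?thesis
        using Q_step less Suc by simp
    next
      case False
      \<comment> \<open>by convexity of P, f j lies between f s and f 0, so f took the value f j before s\<close>
      have jump: "\<bar>f j - f s\<bar> \<le> 1" "f s \<noteq> f j"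
        using step[of s] less.prems False Suc by auto
      have "\<exists>i\<le>s. f i = f j"
      proof (cases "f s < f j")
        case True
        then have "f j \<le> f 0"
          using convex[of "f 0" "f j" "f s"] start(1) less.prems(2) False jump by force
        then show ?thesis
          using nat0_intermed_int_val[of s "\<lambda>i. - f i" "- f j"] step Suc less.prems True
          by (auto simp: abs_minus_commute)
      next
        case False
        then have "f 0 \<le> f j"
          using convex[of "f j" "f 0" "f s"] start(1) less.prems(2) \<open>\<not> P (f s)\<close> jump by force
        then show ?thesis
          using nat0_intermed_int_val[of s f "f j"] step Suc less.prems False jump
          by auto
      qed
      then obtain i where "i \<le> s" "f i = f j" by blast
      then show ?thesis
        using less Q_level[of i j] Suc by simp
    qed
  qed
qed

lemma ceiling_divide_ceiling:
  assumes "N > (0::nat)"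
  shows "\<lceil>of_int \<lceil>t\<rceil> / real N\<rceil> = \<lceil>t / real N\<rceil>"
proof -
  have "\<lceil>of_int \<lceil>t\<rceil> / real N\<rceil> \<le> c \<longleftrightarrow> \<lceil>t / real N\<rceil> \<le> c" for c
  proof -
    have "\<lceil>of_int \<lceil>t\<rceil> / real N\<rceil> \<le> c \<longleftrightarrow> of_int \<lceil>t\<rceil> \<le> of_int c * real N"
      using assms by (simp add: ceiling_le_iff pos_divide_le_eq)
    also have "\<dots> \<longleftrightarrow> \<lceil>t\<rceil> \<le> c * int N"
      by (metis of_int_le_iff of_int_mult of_int_of_nat_eq)
    also have "\<dots> \<longleftrightarrow> t \<le> of_int c * real N"
      by (simp add: ceiling_le_iff)
    also have "\<dots> \<longleftrightarrow> \<lceil>t / real N\<rceil> \<le> c"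
      using assms by (simp add: ceiling_le_iff pos_divide_le_eq)
    finally show ?thesis .
  qed
  then show ?thesis
    by (meson antisym order_refl)
qed

section \<open>The graph metric\<close>

locale graph_metric =
  fixes V :: "'a set" and E :: "'a \<Rightarrow> 'a \<Rightarrow> bool"
  assumes graph: "graph V E"
begin

lemma edge_sym: "E a b \<Longrightarrow> E b a"
  using graph unfolding graph_def by blast

lemma edge_in_vertices:
  assumes "E a b"
  shows "a \<in> V" "b \<in> V"
  using graph assms unfolding graph_def by blast+

lemma path_in_vertices:
  assumes "w 0 \<in> V" "\<And>i. i < t \<Longrightarrow> E (w i) (w (Suc i))" "s \<le> t"
  shows "w s \<in> V"
proof (cases s)
  case (Suc r)
  then show ?thesis
    using edge_in_vertices(2)[OF assms(2)[of r]] assms(3) by simp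
qed (use assms(1) in simp)

lemma walk_iff_relpowp:
  assumes "a \<in> V"
  shows "(\<exists>xs. walk V E xs \<and> hd xs = a \<and> last xs = b \<and> length xs = Suc n) \<longleftrightarrow> (E ^^ n) a b"
proof
  assume "\<exists>xs. walk V E xs \<and> hd xs = a \<and> last xs = b \<and> length xs = Suc n"
  then obtain xs where xs: "walk V E xs" "hd xs = a" "last xs = b" "length xs = Suc n"
    by blast
  show "(E ^^ n) a b"
    unfolding relpowp_fun_conv
  proof (intro exI conjI allI impI)
    have "xs \<noteq> []"
      using xs(4) by auto
    then show "xs ! 0 = a" "xs ! n = b"
      using xs by (auto simp: hd_conv_nth last_conv_nth)
    show "E (xs ! i) (xs ! Suc i)" if "i < n" for i
      using xs that unfolding walk_def by simp
  qed
next
  assume "(E ^^ n) a b"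
  then obtain w where w: "w 0 = a" "w n = b" "\<And>i. i < n \<Longrightarrow> E (w i) (w (Suc i))"
    unfolding relpowp_fun_conv by blast
  let ?xs = "map w [0..<Suc n]"
  have "walk V E ?xs"
    unfolding walk_def using w path_in_vertices[of w n] assms
    by (auto simp del: upt_Suc simp add: less_Suc_eq_le)
  then show "\<exists>xs. walk V E xs \<and> hd xs = a \<and> last xs = b \<and> length xs = Suc n"
    using w by (intro exI[of _ ?xs]) (simp add: hd_map last_map del: upt_Suc)
qed

lemma connected_rtranclp:
  assumes "connected_graph V E" "a \<in> V" "b \<in> V"
  shows "E\<^sup>*\<^sup>* a b"
proof -
  obtain xs where "walk V E xs" "hd xs = a" "last xs = b"
    using assms unfolding connected_graph_def by blast
  moreover have "length xs = Suc (length xs - 1)"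
    using \<open>walk V E xs\<close> unfolding walk_def by simp
  ultimately show ?thesis
    using walk_iff_relpowp[OF assms(2)] relpowp_imp_rtranclp by metis
qed

text \<open>For unreachable b, gdist V E a b is the junk value LEAST of the empty set, i.e. 0.\<close>

lemma gdist_eq_Least: "a \<in> V \<Longrightarrow> gdist V E a b = (LEAST n. (E ^^ n) a b)"
  unfolding gdist_def using walk_iff_relpowp by simp

lemma gdist_le: "a \<in> V \<Longrightarrow> (E ^^ n) a b \<Longrightarrow> gdist V E a b \<le> n"
  by (simp add: gdist_eq_Least Least_le)

lemma relpowp_gdist: "a \<in> V \<Longrightarrow> E\<^sup>*\<^sup>* a b \<Longrightarrow> (E ^^ gdist V E a b) a b"
  unfolding rtranclp_power by (metis gdist_eq_Least LeastI_ex)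

lemma gdist_sym:
  assumes "a \<in> V" "b \<in> V"
  shows "gdist V E a b = gdist V E b a"
proof -
  have "(E ^^ n) a b \<longleftrightarrow> (E ^^ n) b a" for n
    using relpowp_symp[of E] edge_sym by (metis sympI)
  then show ?thesis
    using assms by (simp add: gdist_eq_Least)
qed

lemma gdist_self: "a \<in> V \<Longrightarrow> gdist V E a a = 0"
  using gdist_le[of a 0 a] by simp

lemma gdist_edge: "E a b \<Longrightarrow> gdist V E a b \<le> 1"
  by (metis gdist_le edge_in_vertices(1) relpowp_1)

lemma gdist_le_one_cases:
  assumes "a \<in> V" "E\<^sup>*\<^sup>* a b" "gdist V E a b \<le> 1"
  shows "a = b \<or> E a b"
  using relpowp_gdist[OF assms(1,2)] assms(3) by (cases "gdist V E a b") auto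

lemma gdist_path:
  assumes "w 0 \<in> V" "\<And>i. i < t \<Longrightarrow> E (w i) (w (Suc i))" "i \<le> j" "j \<le> t"
  shows "gdist V E (w i) (w j) \<le> j - i"
proof -
  have "(E ^^ (j - i)) (w i) (w j)"
    unfolding relpowp_fun_conv
    by (rule exI[of _ "\<lambda>s. w (i + s)"]) (use assms(2-4) in auto)
  then show ?thesis
    using gdist_le path_in_vertices assms by (meson le_trans)
qed

lemma gdist_edge_triangle:
  assumes "E a b" "E\<^sup>*\<^sup>* b r"
  shows "gdist V E a r \<le> gdist V E b r + 1"
proof -
  have "(E ^^ Suc (gdist V E b r)) a r"
    using relpowp_Suc_I2[OF assms(1) relpowp_gdist] edge_in_vertices[OF assms(1)] assms(2) by blast
  then show ?thesis
    using gdist_le edge_in_vertices[OF assms(1)] by fastforce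
qed

lemma geodesic_step:
  assumes "a \<in> V" "E\<^sup>*\<^sup>* a r" "a \<noteq> r"
  obtains b where "E a b" "gdist V E b r + 1 = gdist V E a r"
proof -
  have path: "(E ^^ gdist V E a r) a r"
    using relpowp_gdist assms by blast
  then obtain m where m: "gdist V E a r = Suc m"
    using assms(3) by (cases "gdist V E a r") auto
  then obtain b where b: "E a b" "(E ^^ m) b r"
    using path relpowp_Suc_D2 by metis
  have "gdist V E b r \<le> m"
    using gdist_le edge_in_vertices(2)[OF b(1)] b(2) by blast
  moreover have "gdist V E a r \<le> gdist V E b r + 1"
    using gdist_edge_triangle b relpowp_imp_rtranclp by metis
  ultimately show ?thesis
    using that b(1) m by simp
qed

end

section \<open>Blocks as equivalence classes\<close>

text \<open>The layer A_{n,lam} consists of the vertices of level n + 1; the root has level 0.\<close>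

definition level :: "'a set \<Rightarrow> ('a \<Rightarrow> 'a \<Rightarrow> bool) \<Rightarrow> 'a \<Rightarrow> real \<Rightarrow> 'a \<Rightarrow> int" where
  "level V E x0 lam x = \<lceil>real (gdist V E x x0) / lam\<rceil>"

definition block_step ::
    "'a set \<Rightarrow> ('a \<Rightarrow> 'a \<Rightarrow> bool) \<Rightarrow> 'a \<Rightarrow> real \<Rightarrow> real \<Rightarrow> 'a \<Rightarrow> 'a \<Rightarrow> bool" where
  "block_step V E x0 lam k a b \<longleftrightarrow> a \<in> V \<and> b \<in> V \<and>
     level V E x0 lam a = level V E x0 lam b \<and> real (gdist V E a b) \<le> k"

definition block_of ::
    "'a set \<Rightarrow> ('a \<Rightarrow> 'a \<Rightarrow> bool) \<Rightarrow> 'a \<Rightarrow> real \<Rightarrow> real \<Rightarrow> 'a \<Rightarrow> 'a set" where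
  "block_of V E x0 lam k x = {y. (block_step V E x0 lam k)\<^sup>*\<^sup>* x y}"

locale block_structure = graph_metric V E for V :: "'a set" and E +
  fixes x0 :: 'a and lam k :: real
  assumes lam_pos: "lam > 0"
begin

lemma layer_iff: "x \<in> layer V E x0 lam n \<longleftrightarrow> x \<in> V \<and> level V E x0 lam x = n + 1"
proof -
  have "of_int n * lam < t \<and> t \<le> (of_int n + 1) * lam \<longleftrightarrow> \<lceil>t / lam\<rceil> = n + 1" for t
    using lam_pos by (simp add: ceiling_eq_iff pos_less_divide_eq pos_divide_le_eq)
  then show ?thesis
    unfolding layer_def level_def by simp
qed

lemma symp_block_step: "symp (block_step V E x0 lam k)"
  by (intro sympI) (auto simp: block_step_def gdist_sym)

lemma block_step_rtranclp_level:
  "(block_step V E x0 lam k)\<^sup>*\<^sup>* a b \<Longrightarrow> a \<in> V \<Longrightarrow> b \<in> V \<and> level V E x0 lam b = level V E x0 lam a"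
  by (induction rule: rtranclp_induct) (auto simp: block_step_def)

lemma block_of_subset_layer:
  "x \<in> V \<Longrightarrow> block_of V E x0 lam k x \<subseteq> layer V E x0 lam (level V E x0 lam x - 1)"
  unfolding block_of_def using block_step_rtranclp_level by (auto simp: layer_iff)

lemma block_of_eq:
  assumes "y \<in> block_of V E x0 lam k x"
  shows "block_of V E x0 lam k y = block_of V E x0 lam k x"
proof -
  let ?R = "block_step V E x0 lam k"
  have "?R\<^sup>*\<^sup>* x y" "?R\<^sup>*\<^sup>* y x"
    using assms symp_rtranclp[OF symp_block_step] unfolding block_of_def by (auto dest: sympD)
  then show ?thesis
    unfolding block_of_def by (blast intro: rtranclp_trans)
qed

lemma k_connected_block_of: "k_connected (gdist V E) k (block_of V E x0 lam k x)"
  unfolding k_connected_def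
proof (intro ballI)
  let ?R = "block_step V E x0 lam k"
  fix y z
  assume y: "y \<in> block_of V E x0 lam k x" and z: "z \<in> block_of V E x0 lam k x"
  have "z \<in> block_of V E x0 lam k y"
    using block_of_eq[OF y] z by simp
  then have yz: "?R\<^sup>*\<^sup>* y z"
    unfolding block_of_def by simp
  obtain xs where xs: "xs \<noteq> []" "hd xs = y" "last xs = z" "set xs \<subseteq> {c. ?R\<^sup>*\<^sup>* y c}"
    "\<forall>i. Suc i < length xs \<longrightarrow> ?R (xs ! i) (xs ! Suc i)"
    using rtranclp_imp_chain[OF yz] by blast
  have "set xs \<subseteq> block_of V E x0 lam k x"
    using xs(4) block_of_eq[OF y] unfolding block_of_def by auto
  moreover have "\<forall>i. Suc i < length xs \<longrightarrow> real (gdist V E (xs ! i) (xs ! Suc i)) \<le> k"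
    using xs(5) unfolding block_step_def by blast
  ultimately show "\<exists>xs. xs \<noteq> [] \<and> hd xs = y \<and> last xs = z \<and> set xs \<subseteq> block_of V E x0 lam k x \<and>
      (\<forall>i. Suc i < length xs \<longrightarrow> real (gdist V E (xs ! i) (xs ! Suc i)) \<le> k)"
    using xs(1-3) by blast
qed

lemma k_connected_subset_block_of:
  assumes "x \<in> C" "C \<subseteq> layer V E x0 lam n" "k_connected (gdist V E) k C"
  shows "C \<subseteq> block_of V E x0 lam k x"
proof
  fix y
  assume "y \<in> C"
  then obtain xs where xs: "xs \<noteq> []" "hd xs = x" "last xs = y" "set xs \<subseteq> C"
    "\<forall>i. Suc i < length xs \<longrightarrow> real (gdist V E (xs ! i) (xs ! Suc i)) \<le> k"
    using assms(1,3) unfolding k_connected_def by blast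
  have "block_step V E x0 lam k (xs ! i) (xs ! Suc i)" if "Suc i < length xs" for i
  proof -
    have "xs ! i \<in> layer V E x0 lam n" "xs ! Suc i \<in> layer V E x0 lam n"
      using that xs(4) assms(2) nth_mem[of i xs] nth_mem[of "Suc i" xs] by (meson Suc_lessD subsetD)+
    then show ?thesis
      using xs(5) that unfolding block_step_def layer_iff by simp
  qed
  then show "y \<in> block_of V E x0 lam k x"
    using chain_imp_rtranclp[OF xs(1)] xs(2,3) unfolding block_of_def by blast
qed

lemma blocks_eq_block_of: "blocks V E x0 lam k = block_of V E x0 lam k ` V"
proof (intro equalityI subsetI)
  fix B
  assume "B \<in> block_of V E x0 lam k ` V"
  then obtain x where x: "x \<in> V" "B = block_of V E x0 lam k x"
    by blast
  have "x \<in> B"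
    using x(2) unfolding block_of_def by simp
  have "C = B" if "B \<subseteq> C" "C \<subseteq> layer V E x0 lam (level V E x0 lam x - 1)"
    "k_connected (gdist V E) k C" for C
    using k_connected_subset_block_of[of x C] that \<open>x \<in> B\<close> x(2) by blast
  then show "B \<in> blocks V E x0 lam k"
    unfolding blocks_def
    using \<open>x \<in> B\<close> x block_of_subset_layer k_connected_block_of by blast
next
  fix B
  assume "B \<in> blocks V E x0 lam k"
  then obtain n where B: "B \<noteq> {}" "B \<subseteq> layer V E x0 lam n" "k_connected (gdist V E) k B"
    "\<And>C. B \<subseteq> C \<and> C \<subseteq> layer V E x0 lam n \<and> k_connected (gdist V E) k C \<Longrightarrow> C = B"
    unfolding blocks_def by blast
  then obtain x where x: "x \<in> B" "x \<in> V" "level V E x0 lam x - 1 = n"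
    using layer_iff by fastforce
  have "B \<subseteq> block_of V E x0 lam k x"
    using k_connected_subset_block_of[OF x(1) B(2,3)] .
  moreover have "block_of V E x0 lam k x \<subseteq> layer V E x0 lam n"
    using block_of_subset_layer[OF x(2)] x(3) by simp
  ultimately have "block_of V E x0 lam k x = B"
    using B(4) k_connected_block_of by blast
  then show "B \<in> block_of V E x0 lam k ` V"
    using x(2) by blast
qed

lemma skel_map_eq_block_of:
  assumes "x \<in> V"
  shows "skel_map V E x0 lam k x = block_of V E x0 lam k x"
  unfolding skel_map_def
proof (rule the_equality)
  show "block_of V E x0 lam k x \<in> blocks V E x0 lam k \<and> x \<in> block_of V E x0 lam k x"
    using assms unfolding blocks_eq_block_of by (simp add: block_of_def)
next
  fix B
  assume "B \<in> blocks V E x0 lam k \<and> x \<in> B"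
  then show "B = block_of V E x0 lam k x"
    unfolding blocks_eq_block_of using block_of_eq by blast
qed

lemma skel_map_in_blocks: "x \<in> V \<Longrightarrow> skel_map V E x0 lam k x \<in> blocks V E x0 lam k"
  by (simp add: skel_map_eq_block_of blocks_eq_block_of)

lemma mem_skel_map: "x \<in> V \<Longrightarrow> x \<in> skel_map V E x0 lam k x"
  by (simp add: skel_map_eq_block_of block_of_def)

lemma blocks_eq_skel_map: "blocks V E x0 lam k = skel_map V E x0 lam k ` V"
  by (simp add: blocks_eq_block_of skel_map_eq_block_of)

lemma skel_map_of_mem:
  assumes "B \<in> blocks V E x0 lam k" "x \<in> B"
  shows "x \<in> V" "skel_map V E x0 lam k x = B"
proof -
  obtain z where z: "z \<in> V" "B = block_of V E x0 lam k z"
    using assms(1) unfolding blocks_eq_block_of by blast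
  then show "x \<in> V"
    using assms(2) block_of_subset_layer layer_iff by blast
  then show "skel_map V E x0 lam k x = B"
    using z assms(2) block_of_eq skel_map_eq_block_of by metis
qed

lemma skel_map_eq_iff:
  assumes "x \<in> V" "y \<in> V"
  shows "skel_map V E x0 lam k x = skel_map V E x0 lam k y \<longleftrightarrow> (block_step V E x0 lam k)\<^sup>*\<^sup>* x y"
  using assms block_of_eq[of y x] mem_skel_map[of y]
  by (auto simp: skel_map_eq_block_of block_of_def)

lemma skel_map_eq_if_close:
  assumes "x \<in> V" "y \<in> V" "level V E x0 lam x = level V E x0 lam y" "real (gdist V E x y) \<le> k"
  shows "skel_map V E x0 lam k x = skel_map V E x0 lam k y"
  using assms by (simp add: skel_map_eq_iff block_step_def r_into_rtranclp)

lemma graph_skeleton: "graph (blocks V E x0 lam k) (skel_E V E x0 lam k)"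
  unfolding graph_def skel_E_def using edge_sym by blast

lemma skel_E_imp_edge:
  assumes "skel_E V E x0 lam k B C"
  obtains a b where "E a b" "B = skel_map V E x0 lam k a" "C = skel_map V E x0 lam k b"
  using assms skel_map_of_mem(2) unfolding skel_E_def by metis

lemma edge_imp_skel_E:
  assumes "E a b"
  shows "skel_map V E x0 lam k a = skel_map V E x0 lam k b \<or>
    skel_E V E x0 lam k (skel_map V E x0 lam k a) (skel_map V E x0 lam k b)"
  using assms edge_in_vertices[OF assms] skel_map_in_blocks mem_skel_map
  unfolding skel_E_def by blast

lemma skel_E_skel_map_iff:
  assumes "x \<in> V" "y \<in> V"
  shows "skel_E V E x0 lam k (skel_map V E x0 lam k x) (skel_map V E x0 lam k y) \<longleftrightarrow>
    skel_map V E x0 lam k x \<noteq> skel_map V E x0 lam k y \<and>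
    (\<exists>a b. E a b \<and> skel_map V E x0 lam k a = skel_map V E x0 lam k x \<and>
      skel_map V E x0 lam k b = skel_map V E x0 lam k y)"
  using assms skel_map_in_blocks skel_map_of_mem mem_skel_map edge_in_vertices
  unfolding skel_E_def by metis

lemma rtranclp_skel_E:
  "E\<^sup>*\<^sup>* a b \<Longrightarrow> (skel_E V E x0 lam k)\<^sup>*\<^sup>* (skel_map V E x0 lam k a) (skel_map V E x0 lam k b)"
proof (induction rule: rtranclp_induct)
  case (step b c)
  then show ?case
    using edge_imp_skel_E[of b c] by (metis rtranclp.rtrancl_into_rtrancl)
qed simp

end

section \<open>The skeleton of a skeleton\<close>

locale iterated_skeleton = block_structure V E x0 lam k
  for V :: "'a set" and E x0 lam k +
  fixes N :: nat
  assumes connected: "connected_graph V E" and root: "x0 \<in> V"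
    and lam_ge_1: "lam \<ge> 1" and k_ge_1: "k \<ge> 1" and N_pos: "N \<ge> 1"
begin

abbreviation "Vb \<equiv> blocks V E x0 lam k"
abbreviation "Eb \<equiv> skel_E V E x0 lam k"
abbreviation "S \<equiv> skel_map V E x0 lam k"
abbreviation "S_coarse \<equiv> skel_map V E x0 (real N * lam) k"
abbreviation "S_skel \<equiv> skel_map Vb Eb (S x0) (real N) 1"
abbreviation "coarse_step \<equiv> block_step V E x0 (real N * lam) k"
abbreviation "skel_step \<equiv> block_step Vb Eb (S x0) (real N) 1"

end

sublocale iterated_skeleton \<subseteq> coarse: block_structure V E x0 "real N * lam" k
  using lam_pos N_pos by unfold_locales simp

sublocale iterated_skeleton \<subseteq> skel: block_structure Vb Eb "S x0" "real N" 1
  using graph_skeleton N_pos by unfold_locales simp_all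

context iterated_skeleton
begin

lemma reaches_root: "x \<in> V \<Longrightarrow> E\<^sup>*\<^sup>* x x0"
  using connected_rtranclp[OF connected _ root] .

lemma level_root: "level V E x0 lam x0 = 0"
  by (simp add: level_def gdist_self root)

lemma level_edge:
  assumes "E a b"
  shows "level V E x0 lam a \<le> level V E x0 lam b + 1"
proof -
  have "real (gdist V E a x0) \<le> real (gdist V E b x0) + 1"
    using gdist_edge_triangle[OF assms reaches_root] edge_in_vertices[OF assms] by simp
  then have "real (gdist V E a x0) / lam \<le> real (gdist V E b x0) / lam + 1"
    using lam_ge_1 by (simp add: divide_le_eq algebra_simps)
  then show ?thesis
    unfolding level_def by (metis ceiling_add_one ceiling_mono)
qed

lemma level_edge_abs: "E a b \<Longrightarrow> \<bar>level V E x0 lam b - level V E x0 lam a\<bar> \<le> 1"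
  using level_edge[of a b] level_edge[of b a] edge_sym by fastforce

lemma skel_relpowp_root_le_level:
  assumes "x \<in> V"
  obtains n where "(Eb ^^ n) (S x) (S x0)" "int n \<le> level V E x0 lam x"
  using assms
proof (induction "gdist V E x x0" arbitrary: x thesis rule: less_induct)
  case less
  show ?case
  proof (cases "x = x0")
    case True
    then show ?thesis
      using less.prems(1)[of 0] level_root by simp
  next
    case False
    then obtain y where y: "E x y" "gdist V E y x0 + 1 = gdist V E x x0"
      using geodesic_step less.prems(2) reaches_root by blast
    have "y \<in> V"
      using edge_in_vertices(2)[OF y(1)] .
    then obtain n where n: "(Eb ^^ n) (S y) (S x0)" "int n \<le> level V E x0 lam y"
      using less.hyps[of y] y(2) by auto
    have "level V E x0 lam y \<le> level V E x0 lam x"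
      unfolding level_def using y(2) lam_pos by (intro ceiling_mono divide_right_mono) auto
    moreover have "level V E x0 lam x \<le> level V E x0 lam y + 1"
      using level_edge[OF y(1)] .
    ultimately consider "level V E x0 lam x = level V E x0 lam y"
      | "level V E x0 lam x = level V E x0 lam y + 1"
      by linarith
    then show ?thesis
    proof cases
      case 1
      then have "S x = S y"
        using skel_map_eq_if_close less.prems(2) \<open>y \<in> V\<close> gdist_edge[OF y(1)] k_ge_1 by force
      then show ?thesis
        using less.prems(1) n 1 by simp
    next
      case 2
      then show ?thesis
        using edge_imp_skel_E[OF y(1)] less.prems(1)[of n] less.prems(1)[of "Suc n"] n
          relpowp_Suc_I2[of Eb "S x" "S y" n "S x0"] by fastforce
    qed
  qed
qed

lemma level_le_skel_relpowp_root:
  "(Eb ^^ n) B (S x0) \<Longrightarrow> B \<in> Vb \<Longrightarrow> x \<in> B \<Longrightarrow> level V E x0 lam x \<le> int n"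
proof (induction n arbitrary: B x)
  case 0
  then have "x \<in> V" "S x = S x0"
    using skel_map_of_mem by auto
  then show ?case
    using skel_map_eq_iff[OF _ root] block_step_rtranclp_level level_root by force
next
  case (Suc n)
  then obtain C where C: "Eb B C" "(Eb ^^ n) C (S x0)"
    using relpowp_Suc_D2 by metis
  then obtain a b where ab: "E a b" "B = S a" "C = S b"
    using skel_E_imp_edge by blast
  have "level V E x0 lam b \<le> int n"
    using Suc.IH[OF C(2)] ab(3) edge_in_vertices(2)[OF ab(1)] skel_map_in_blocks mem_skel_map by blast
  moreover have "level V E x0 lam x = level V E x0 lam a"
    using Suc.prems ab(2) edge_in_vertices(1)[OF ab(1)] skel_map_eq_iff skel_map_of_mem
      block_step_rtranclp_level by metis
  ultimately show ?case
    using level_edge[OF ab(1)] by simp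
qed

lemma skel_gdist_root_eq_level:
  assumes "x \<in> V"
  shows "int (gdist Vb Eb (S x) (S x0)) = level V E x0 lam x"
proof -
  obtain n where n: "(Eb ^^ n) (S x) (S x0)" "int n \<le> level V E x0 lam x"
    using skel_relpowp_root_le_level[OF assms] .
  have Sx: "S x \<in> Vb" "x \<in> S x"
    using assms skel_map_in_blocks mem_skel_map by auto
  have "gdist Vb Eb (S x) (S x0) \<le> n"
    using skel.gdist_le[OF Sx(1) n(1)] .
  moreover have "(Eb ^^ gdist Vb Eb (S x) (S x0)) (S x) (S x0)"
    using skel.relpowp_gdist[OF Sx(1)] n(1) relpowp_imp_rtranclp by metis
  then have "level V E x0 lam x \<le> int (gdist Vb Eb (S x) (S x0))"
    using level_le_skel_relpowp_root Sx by blast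
  ultimately show ?thesis
    using n(2) by linarith
qed

lemma coarse_level: "level V E x0 (real N * lam) x = \<lceil>of_int (level V E x0 lam x) / real N\<rceil>"
  using ceiling_divide_ceiling[of N "real (gdist V E x x0) / lam"] N_pos
  by (simp add: level_def mult.commute divide_divide_eq_left)

lemma skel_level_eq_coarse_level:
  assumes "x \<in> V"
  shows "level Vb Eb (S x0) (real N) (S x) = level V E x0 (real N * lam) x"
proof -
  have "real (gdist Vb Eb (S x) (S x0)) = of_int (level V E x0 lam x)"
    using skel_gdist_root_eq_level[OF assms] by (metis of_int_of_nat_eq)
  then have "level Vb Eb (S x0) (real N) (S x) = \<lceil>of_int (level V E x0 lam x) / real N\<rceil>"
    by (simp add: level_def[of Vb])
  then show ?thesis
    by (simp add: coarse_level)
qed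

lemma coarse_rtranclp_if_same_block:
  assumes "a \<in> V" "b \<in> V" "S a = S b"
  shows "coarse_step\<^sup>*\<^sup>* a b"
proof -
  have "block_step V E x0 lam k \<le> coarse_step"
    by (auto simp: block_step_def coarse_level)
  then show ?thesis
    using assms skel_map_eq_iff rtranclp_mono by blast
qed

lemma coarse_rtranclp_if_skel_step:
  assumes "a \<in> V" "b \<in> V" "skel_step (S a) (S b)"
  shows "coarse_step\<^sup>*\<^sup>* a b"
proof -
  have "Eb\<^sup>*\<^sup>* (S a) (S b)"
    using rtranclp_skel_E connected_rtranclp[OF connected assms(1,2)] by blast
  then consider "S a = S b" | "Eb (S a) (S b)"
    using skel.gdist_le_one_cases assms(3) unfolding block_step_def by force
  then show ?thesis
  proof cases
    case 1
    then show ?thesis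
      using coarse_rtranclp_if_same_block assms(1,2) by blast
  next
    case 2
    then obtain a' b' where ab': "E a' b'" "S a = S a'" "S b = S b'"
      using skel_E_imp_edge by metis
    have V': "a' \<in> V" "b' \<in> V"
      using edge_in_vertices ab'(1) by auto
    have "level V E x0 (real N * lam) a' = level V E x0 (real N * lam) b'"
      using assms(3) ab'(2,3) V' by (simp add: block_step_def skel_level_eq_coarse_level)
    then have "coarse_step a' b'"
      using V' gdist_edge[OF ab'(1)] k_ge_1 by (simp add: block_step_def)
    moreover have "coarse_step\<^sup>*\<^sup>* a a'" "coarse_step\<^sup>*\<^sup>* b' b"
      using coarse_rtranclp_if_same_block assms(1,2) V' ab'(2,3) by simp_all
    ultimately show ?thesis
      by (meson converse_rtranclp_into_rtranclp rtranclp_trans)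
  qed
qed

lemma coarse_rtranclp_if_skel_rtranclp:
  assumes "skel_step\<^sup>*\<^sup>* (S a) (S b)" "a \<in> V" "b \<in> V"
  shows "coarse_step\<^sup>*\<^sup>* a b"
proof -
  have "coarse_step\<^sup>*\<^sup>* a b" if "skel_step\<^sup>*\<^sup>* (S a) C" "C = S b" "b \<in> V" for C b
    using that
  proof (induction arbitrary: b rule: rtranclp_induct)
    case base
    then show ?case
      using coarse_rtranclp_if_same_block assms(2) by simp
  next
    case (step C D)
    then obtain c where "c \<in> V" "C = S c"
      using blocks_eq_skel_map unfolding block_step_def by blast
    then show ?case
      using step coarse_rtranclp_if_skel_step rtranclp_trans by metis
  qed
  then show ?thesis
    using assms by blast
qed

lemma skel_step_if_edge:
  assumes "E a b" "level V E x0 (real N * lam) a = level V E x0 (real N * lam) b"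
  shows "skel_step (S a) (S b)"
proof -
  have V: "a \<in> V" "b \<in> V"
    using edge_in_vertices assms(1) by auto
  have "gdist Vb Eb (S a) (S b) \<le> 1"
    using edge_imp_skel_E[OF assms(1)] skel.gdist_self skel.gdist_edge skel_map_in_blocks V by force
  then show ?thesis
    using assms(2) V skel_map_in_blocks by (simp add: block_step_def skel_level_eq_coarse_level)
qed

lemma skel_rtranclp_if_coarse_step:
  assumes "coarse_step u v"
  shows "skel_step\<^sup>*\<^sup>* (S u) (S v)"
proof -
  let ?lev = "level V E x0 lam" and ?coarse = "level V E x0 (real N * lam)"
  have u: "u \<in> V" "v \<in> V" "?coarse u = ?coarse v" "real (gdist V E u v) \<le> k"
    using assms unfolding block_step_def by auto
  define t where "t = gdist V E u v"
  obtain w where w: "w 0 = u" "w t = v" "\<And>i. i < t \<Longrightarrow> E (w i) (w (Suc i))"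
    using relpowp_gdist[OF u(1) connected_rtranclp[OF connected u(1,2)]]
    unfolding t_def relpowp_fun_conv by blast
  define P where "P l \<longleftrightarrow> \<lceil>of_int l / real N\<rceil> = ?coarse u" for l
  have P_iff: "P (?lev z) \<longleftrightarrow> ?coarse z = ?coarse u" for z
    by (simp add: P_def coarse_level)
  \<comment> \<open>the geodesic from u to v may leave the coarse layer of u, but its vertices of equal level
    lie within distance k of each other and hence in one block\<close>
  have "skel_step\<^sup>*\<^sup>* (S u) (S (w t))"
  proof (rule int_path_propagate[where f = "\<lambda>s. ?lev (w s)" and P = P])
    show "\<bar>?lev (w (Suc s)) - ?lev (w s)\<bar> \<le> 1" if "s < t" for s
      using level_edge_abs w(3) that by blast
    show "P m" if "P l" "P h" "l \<le> m" "m \<le> h" for l m h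
      using that N_pos unfolding P_def
      by (smt (verit) ceiling_mono divide_right_mono of_int_le_iff of_nat_0_le_iff)
    show "skel_step\<^sup>*\<^sup>* (S u) (S (w (Suc s)))"
      if "s < t" "P (?lev (w s))" "P (?lev (w (Suc s)))" "skel_step\<^sup>*\<^sup>* (S u) (S (w s))" for s
      using that skel_step_if_edge[OF w(3)] P_iff by (metis rtranclp.rtrancl_into_rtrancl)
    show "skel_step\<^sup>*\<^sup>* (S u) (S (w j))"
      if "i < j" "j \<le> t" "?lev (w i) = ?lev (w j)" "skel_step\<^sup>*\<^sup>* (S u) (S (w i))" for i j
    proof -
      have "gdist V E (w i) (w j) \<le> t"
        using gdist_path[of w t i j] w u(1) that(1,2) by simp
      then have "S (w i) = S (w j)"
        using skel_map_eq_if_close path_in_vertices[of w t] w u that t_def by force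
      then show ?thesis
        using that(4) by simp
    qed
  qed (use w u P_iff in auto)
  then show ?thesis
    using w(2) by simp
qed

lemma coarse_eq_iff_skel_eq:
  assumes "x \<in> V" "y \<in> V"
  shows "S_coarse x = S_coarse y \<longleftrightarrow> S_skel (S x) = S_skel (S y)"
proof -
  have "coarse_step\<^sup>*\<^sup>* x y \<Longrightarrow> skel_step\<^sup>*\<^sup>* (S x) (S y)"
    by (induction rule: rtranclp_induct) (auto intro: rtranclp_trans skel_rtranclp_if_coarse_step)
  then show ?thesis
    using coarse.skel_map_eq_iff[OF assms] skel.skel_map_eq_iff skel_map_in_blocks assms
      coarse_rtranclp_if_skel_rtranclp by blast
qed

lemma coarse_edge_iff_skel_edge:
  assumes "x \<in> V" "y \<in> V"
  shows "skel_E V E x0 (real N * lam) k (S_coarse x) (S_coarse y) \<longleftrightarrow>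
    skel_E Vb Eb (S x0) (real N) 1 (S_skel (S x)) (S_skel (S y))"
proof -
  have SV: "S x \<in> Vb" "S y \<in> Vb"
    using assms skel_map_in_blocks by auto
  have lift: "\<exists>a b. E a b \<and> S_coarse a = S_coarse x \<and> S_coarse b = S_coarse y"
    if BC: "Eb B C" "S_skel B = S_skel (S x)" "S_skel C = S_skel (S y)" for B C
  proof -
    obtain a b where ab: "E a b" "B = S a" "C = S b"
      using skel_E_imp_edge[OF BC(1)] by blast
    moreover have "S_coarse a = S_coarse x" "S_coarse b = S_coarse y"
      using BC(2,3) ab(2,3) coarse_eq_iff_skel_eq edge_in_vertices[OF ab(1)] assms by simp_all
    ultimately show ?thesis
      by blast
  qed
  have proj: "\<exists>B C. Eb B C \<and> S_skel B = S_skel (S x) \<and> S_skel C = S_skel (S y)"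
    if "E a b" "S_coarse a = S_coarse x" "S_coarse b = S_coarse y" "S_coarse x \<noteq> S_coarse y" for a b
  proof -
    have V: "a \<in> V" "b \<in> V"
      using edge_in_vertices that(1) by auto
    then have "S a \<noteq> S b"
      using that(2-4) coarse_eq_iff_skel_eq[OF V] by auto
    then have "Eb (S a) (S b)"
      using edge_imp_skel_E[OF that(1)] by blast
    moreover have "S_skel (S a) = S_skel (S x)" "S_skel (S b) = S_skel (S y)"
      using that(2,3) coarse_eq_iff_skel_eq V assms by blast+
    ultimately show ?thesis
      by blast
  qed
  have "S_coarse x \<noteq> S_coarse y \<longleftrightarrow> S_skel (S x) \<noteq> S_skel (S y)"
    using coarse_eq_iff_skel_eq[OF assms] by simp
  then show ?thesis
    unfolding coarse.skel_E_skel_map_iff[OF assms] skel.skel_E_skel_map_iff[OF SV]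
    using lift proj by meson
qed

end

theorem proposition1:
  fixes V :: "'a set" and E :: "'a \<Rightarrow> 'a \<Rightarrow> bool" and x0 :: 'a
    and lam k :: real and N :: nat
  assumes "graph V E" and "connected_graph V E" and "x0 \<in> V"
    and "lam \<ge> 1" and "k \<ge> 1" and "N \<ge> 1"
  shows "\<forall>x\<in>V. \<forall>y\<in>V.
     (skel_map V E x0 (real N * lam) k x = skel_map V E x0 (real N * lam) k y \<longleftrightarrow>
        skel_map (blocks V E x0 lam k) (skel_E V E x0 lam k) (skel_map V E x0 lam k x0) (real N) 1
           (skel_map V E x0 lam k x) =
        skel_map (blocks V E x0 lam k) (skel_E V E x0 lam k) (skel_map V E x0 lam k x0) (real N) 1
           (skel_map V E x0 lam k y))
   \<and> (skel_E V E x0 (real N * lam) k (skel_map V E x0 (real N * lam) k x)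
                                      (skel_map V E x0 (real N * lam) k y) \<longleftrightarrow>
      skel_E (blocks V E x0 lam k) (skel_E V E x0 lam k) (skel_map V E x0 lam k x0) (real N) 1
        (skel_map (blocks V E x0 lam k) (skel_E V E x0 lam k) (skel_map V E x0 lam k x0) (real N) 1
           (skel_map V E x0 lam k x))
        (skel_map (blocks V E x0 lam k) (skel_E V E x0 lam k) (skel_map V E x0 lam k x0) (real N) 1
           (skel_map V E x0 lam k y)))"
proof -
  interpret iterated_skeleton V E x0 lam k N
    using assms by unfold_locales simp_all
  show ?thesis
    using coarse_eq_iff_skel_eq coarse_edge_iff_skel_edge by blast
qed

end
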